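(* Let $\varepsilon$ be an integer with $\varepsilon\equiv 2\pmod{4}$. Then there exist infinitely many positive odd integers $n$ with the property that there exist positive integers $d_1, d_2$, each dividing $\frac{n^2+1}{2}$, such that $d_1+d_2=4n+\varepsilon$. *)

theory Defs
  imports Main
begin

end

theory Submission
  imports Defs "HOL-Analysis.Kronecker_Approximation_Theorem"
begin

text \<open>Write \<open>n = (gs - \<epsilon>)/4\<close>, \<open>d\<^sub>1 = g(s - t)/2\<close> and \<open>d\<^sub>2 = g(s + t)/2\<close>. Then
  \<open>d\<^sub>1 + d\<^sub>2 = 4n + \<epsilon>\<close>, and both divide \<open>(n\<^sup>2 + 1)/2 = gr(s\<^sup>2 - t\<^sup>2)/4\<close> whenever
  \<open>(gs - \<epsilon>)\<^sup>2 + 16 = 8gr(s\<^sup>2 - t\<^sup>2)\<close>. For fixed \<open>g, r\<close> this is a hyperbola in \<open>(s, t)\<close>, and a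
  solution of the Pell equation \<open>u\<^sup>2 - 8r(8r - g)w\<^sup>2 = 1\<close> acts on its integral points by an
  automorphism that increases \<open>s\<close>; so a single integral point yields infinitely many \<open>n\<close>.
  For \<open>\<epsilon> = 8j + 6\<close> take \<open>g = 1\<close>, \<open>r = 2j\<^sup>2 + 2j + 1\<close> with the seed \<open>(s, t) = (2, 0)\<close> and the
  explicit Pell solution \<open>(16r - 1, 2)\<close>. For \<open>\<epsilon> = 8j + 2\<close> a polynomial family of parameters
  and seeds is used, and Pell's equation is solved in general via Dirichlet approximation.\<close>

lemma sqrt_nonsquare_irrational:
  fixes D :: nat
  assumes "\<And>x. x^2 \<noteq> D"
  shows "sqrt (real D) \<notin> \<rat>"
proof
  assume "sqrt (real D) \<in> \<rat>"
  then obtain m n :: nat where n: "n \<noteq> 0" and mn: "\<bar>sqrt (real D)\<bar> = real m / real n"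
    and cop: "coprime m n"
    by (rule Rats_abs_nat_div_natE)
  have "real n * sqrt (real D) = real m"
    using n mn by (simp add: field_simps)
  hence "real D * (real n)^2 = (real m)^2"
    by (metis of_nat_0_le_iff power_mult_distrib real_sqrt_pow2 mult.commute)
  hence eq: "D * n^2 = m^2"
    by (metis of_nat_eq_iff of_nat_mult of_nat_power)
  have "coprime (n^2) (m^2)"
    using cop by (simp add: coprime_commute)
  moreover have "n^2 dvd m^2"
    using eq by (metis dvd_triv_right)
  ultimately have "is_unit (n^2)"
    using coprime_common_divisor dvd_refl by blast
  hence "D = m^2"
    using eq by simp
  thus False
    using assms by blast
qed

lemma approx_set_sqrt_norm_nonzero:
  fixes D :: nat
  assumes "(h, k) \<in> approx_set (sqrt (real D))" and "\<And>x. x^2 \<noteq> D"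
  shows "h^2 - int D * k^2 \<noteq> 0"
proof
  assume "h^2 - int D * k^2 = 0"
  hence "of_int (int D * k^2) = (of_int (h^2) :: real)"
    by simp
  hence "real D * (of_int k)^2 = (of_int h)^2"
    by simp
  moreover have "k \<noteq> 0"
    using assms(1) by (simp add: approx_set_def)
  ultimately have "real D = (of_int h / of_int k)^2"
    by (simp add: field_simps)
  hence "sqrt (real D) = \<bar>of_int h / of_int k\<bar>"
    by simp
  hence "sqrt (real D) \<in> \<rat>"
    by simp
  thus False
    using sqrt_nonsquare_irrational assms(2) by blast
qed

lemma approx_set_sqrt_norm_bound:
  fixes D :: nat
  assumes "(h, k) \<in> approx_set (sqrt (real D))"
  shows "\<bar>h^2 - int D * k^2\<bar> \<le> \<lceil>2 * sqrt (real D) + 1\<rceil>"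
proof -
  define \<theta> where "\<theta> = sqrt (real D)"
  have k: "k > 0" and ap: "\<bar>\<theta> - of_int h / of_int k\<bar> < 1 / (of_int k)^2"
    using assms by (auto simp: approx_set_def \<theta>_def)
  have close: "\<bar>of_int h - of_int k * \<theta>\<bar> \<le> 1 / of_int k"
  proof -
    have "\<bar>of_int h - of_int k * \<theta>\<bar> = of_int k * \<bar>\<theta> - of_int h / of_int k\<bar>"
      using k by (simp add: field_simps flip: abs_mult)
    also have "\<dots> \<le> of_int k * (1 / (of_int k)^2)"
      using ap k by (intro mult_left_mono) auto
    finally show ?thesis
      using k by (simp add: power2_eq_square)
  qed
  have "of_int k * \<theta> \<ge> 0"
    using k by (simp add: \<theta>_def)
  hence far: "\<bar>of_int h + of_int k * \<theta>\<bar> \<le> 1 / of_int k + 2 * of_int k * \<theta>"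
    using close by linarith
  have "of_int (h^2 - int D * k^2) = (of_int h - of_int k * \<theta>) * (of_int h + of_int k * \<theta>)"
    by (simp add: \<theta>_def algebra_simps power2_eq_square)
  hence "\<bar>of_int (h^2 - int D * k^2)\<bar> = \<bar>of_int h - of_int k * \<theta>\<bar> * \<bar>of_int h + of_int k * \<theta>\<bar>"
    by (simp add: abs_mult)
  also have "\<dots> \<le> 1 / of_int k * (1 / of_int k + 2 * of_int k * \<theta>)"
    using close far k by (intro mult_mono) auto
  also have "\<dots> = 1 / (of_int k)^2 + 2 * \<theta>"
    using k by (simp add: field_simps power2_eq_square)
  also have "\<dots> \<le> 2 * \<theta> + 1"
    using k by (simp add: power_le_one_iff)
  finally show ?thesis
    unfolding \<theta>_def by (metis ceiling_mono ceiling_of_int of_int_abs)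
qed

lemma approx_set_cross_product_eq:
  assumes "(h1, k1) \<in> approx_set \<theta>" "(h2, k2) \<in> approx_set \<theta>" "h1 * k2 = h2 * k1"
  shows "(h1, k1) = (h2, k2)"
proof -
  have k1: "k1 > 0" "coprime h1 k1" and k2: "k2 > 0" "coprime h2 k2"
    using assms(1,2) by (auto simp: approx_set_def)
  have "k1 dvd h1 * k2" "k2 dvd h2 * k1"
    using assms(3) by (metis dvd_triv_right)+
  hence "k1 dvd k2" "k2 dvd k1"
    using k1 k2 by (simp_all add: coprime_dvd_mult_right_iff coprime_commute)
  hence "k1 = k2"
    using k1 k2 by (simp add: zdvd_antisym_nonneg)
  thus ?thesis
    using assms(3) k1 by simp
qed

text \<open>If \<open>h\<^sub>1 + k\<^sub>1\<surd>D\<close> and \<open>h\<^sub>2 + k\<^sub>2\<surd>D\<close> have the same norm \<open>m\<close> and are congruent modulo \<open>m\<close>,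
  then \<open>(h\<^sub>1 + k\<^sub>1\<surd>D)(h\<^sub>2 - k\<^sub>2\<surd>D)/m = x + y\<surd>D\<close> is integral of norm 1.\<close>

lemma pell_solution_of_congruent_pair:
  fixes D h1 k1 h2 k2 m :: int
  assumes norm1: "h1^2 - D * k1^2 = m" and norm2: "h2^2 - D * k2^2 = m" and "m \<noteq> 0"
    and "m dvd h2 - h1" "m dvd k2 - k1" and "h1 * k2 \<noteq> h2 * k1"
  shows "\<exists>x y. y > 0 \<and> x^2 = 1 + D * y^2"
proof -
  obtain u v where u: "h2 = h1 + m * u" and v: "k2 = k1 + m * v"
    using assms(4,5) by (metis add_diff_cancel_left' add_diff_eq dvdE)
  define x where "x = 1 + h1 * u - D * k1 * v"
  define y where "y = h1 * v - k1 * u"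
  have "(h1 * h2 - D * k1 * k2)^2 - D * (h1 * k2 - h2 * k1)^2
          = (h1^2 - D * k1^2) * (h2^2 - D * k2^2)"
    by (simp add: algebra_simps power2_eq_square)
  moreover have "h1 * h2 - D * k1 * k2 = m * x"
    unfolding x_def u v using norm1 by (simp add: algebra_simps power2_eq_square)
  moreover have "h1 * k2 - h2 * k1 = m * y"
    unfolding y_def u v by (simp add: algebra_simps)
  ultimately have "(m * x)^2 - D * (m * y)^2 = m * m"
    using norm1 norm2 by simp
  hence "m^2 * (x^2 - D * y^2) = m^2"
    by (simp add: algebra_simps power2_eq_square)
  hence "x^2 = 1 + D * \<bar>y\<bar>^2"
    using \<open>m \<noteq> 0\<close> by simp
  moreover have "y \<noteq> 0"
    using \<open>h1 * k2 - h2 * k1 = m * y\<close> assms(6) by auto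
  ultimately show ?thesis
    by (intro exI[of _ x] exI[of _ "\<bar>y\<bar>"]) simp
qed

text \<open>Infinitely many approximants \<open>h/k\<close> of \<open>\<surd>D\<close> have norm \<open>h\<^sup>2 - D k\<^sup>2\<close> bounded by
  \<open>2\<surd>D + 1\<close>, so two of them share the norm and the residues of \<open>h\<close> and \<open>k\<close> modulo it.\<close>

theorem pell_solution_exists:
  fixes D :: nat
  assumes nonsquare: "\<And>x. x^2 \<noteq> D"
  shows "\<exists>x y :: int. y > 0 \<and> x^2 = 1 + int D * y^2"
proof -
  define A where "A = approx_set (sqrt (real D))"
  define B where "B = \<lceil>2 * sqrt (real D) + 1\<rceil>"
  define f where "f = (\<lambda>(h, k). let m = h^2 - int D * k^2 in (m, h mod m, k mod m))"
  have "infinite A"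
    using sqrt_nonsquare_irrational[OF nonsquare] rational_iff_finite_approx_set
    unfolding A_def by blast
  moreover have "finite (f ` A)"
  proof (rule finite_subset)
    show "finite ({-B..B} \<times> {-B..B} \<times> {-B..B})"
      by simp
    show "f ` A \<subseteq> {-B..B} \<times> {-B..B} \<times> {-B..B}"
    proof (rule image_subsetI)
      fix p assume "p \<in> A"
      then obtain h k where p: "p = (h, k)" and hk: "(h, k) \<in> A"
        by (cases p) simp
      define m where "m = h^2 - int D * k^2"
      have "m \<noteq> 0" "\<bar>m\<bar> \<le> B"
        using hk approx_set_sqrt_norm_nonzero[OF _ nonsquare] approx_set_sqrt_norm_bound
        unfolding A_def B_def m_def by auto
      moreover have "\<bar>h mod m\<bar> < \<bar>m\<bar>" "\<bar>k mod m\<bar> < \<bar>m\<bar>"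
        using \<open>m \<noteq> 0\<close> by (simp_all add: abs_mod_less)
      ultimately have "\<bar>m\<bar> \<le> B" "\<bar>h mod m\<bar> \<le> B" "\<bar>k mod m\<bar> \<le> B"
        by linarith+
      moreover have "f (h, k) = (m, h mod m, k mod m)"
        by (simp add: f_def m_def Let_def)
      ultimately show "f p \<in> {-B..B} \<times> {-B..B} \<times> {-B..B}"
        unfolding p by (simp add: abs_le_iff)
    qed
  qed
  ultimately have "\<not> inj_on f A"
    using finite_imageD by blast
  then obtain h1 k1 h2 k2 where in_A: "(h1, k1) \<in> A" "(h2, k2) \<in> A"
    and distinct: "(h1, k1) \<noteq> (h2, k2)" and same: "f (h1, k1) = f (h2, k2)"
    unfolding inj_on_def by auto
  define m where "m = h1^2 - int D * k1^2"
  have "h2^2 - int D * k2^2 = m" "h2 mod m = h1 mod m" "k2 mod m = k1 mod m"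
    using same unfolding f_def m_def by (auto simp: Let_def)
  hence "h2^2 - int D * k2^2 = m" "m dvd h2 - h1" "m dvd k2 - k1"
    by (simp_all only: mod_eq_dvd_iff)
  moreover have "m \<noteq> 0"
    using in_A approx_set_sqrt_norm_nonzero[OF _ nonsquare] unfolding A_def m_def by blast
  moreover have "h1 * k2 \<noteq> h2 * k1"
    using in_A distinct approx_set_cross_product_eq unfolding A_def by blast
  ultimately show ?thesis
    using pell_solution_of_congruent_pair[OF m_def[symmetric]] by blast
qed

definition admissible :: "int \<Rightarrow> int \<Rightarrow> bool" where
  "admissible e n \<longleftrightarrow> n > 0 \<and> odd n \<and>
     (\<exists>d1 d2. d1 > 0 \<and> d2 > 0 \<and> d1 dvd (n^2 + 1) div 2 \<and> d2 dvd (n^2 + 1) div 2 \<and>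
        d1 + d2 = 4 * n + e)"

lemma square_plus_16_eq_32_mult:
  fixes y X :: int
  assumes "y^2 + 16 = 32 * X"
  obtains n where "y = 4 * n" "odd n" "(n^2 + 1) div 2 = X"
proof -
  have "y^2 = 2 * (16 * X - 8)"
    using assms by simp
  hence "even (y^2)"
    by simp
  then obtain y1 where y1: "y = 2 * y1"
    by auto
  hence "y1^2 + 4 = 8 * X"
    using assms by (simp add: power_mult_distrib)
  hence "y1^2 = 2 * (4 * X - 2)"
    by simp
  hence "even (y1^2)"
    by simp
  then obtain n where n: "y1 = 2 * n"
    by auto
  hence "n^2 + 1 = 2 * X"
    using \<open>y1^2 + 4 = 8 * X\<close> by (simp add: power_mult_distrib)
  moreover from this have "odd n"
    by (metis dvd_triv_left even_add even_power odd_one pos2)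
  ultimately show thesis
    using that y1 n by simp
qed

definition conic_point :: "int \<Rightarrow> int \<Rightarrow> int \<Rightarrow> int \<Rightarrow> int \<Rightarrow> bool" where
  "conic_point g r e s t \<longleftrightarrow> (g * s - e)^2 + 16 = 8 * g * r * (s^2 - t^2) \<and> 0 \<le> t \<and> even (s - t)"

lemma admissible_of_conic_point:
  assumes "conic_point g r e s t" and "g > 0" "r > 0" "s > \<bar>e\<bar>"
  obtains n where "g * s - e = 4 * n" "admissible e n"
proof -
  have conic: "(g * s - e)^2 + 16 = 8 * g * r * (s^2 - t^2)" and "0 \<le> t" "even (s - t)"
    using assms(1) by (simp_all add: conic_point_def)
  then obtain a where a: "s - t = 2 * a"
    by blast
  define b where "b = a + t"
  have "0 < 8 * g * r * (s^2 - t^2)"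
    using conic by (metis add_nonneg_pos zero_le_power2 zero_less_numeral)
  hence "t^2 < s^2"
    using assms(2,3) zero_less_mult_pos[of "8 * g * r" "s^2 - t^2"] by simp
  hence "t < s"
    using \<open>0 \<le> t\<close> assms(4) by (simp add: power_less_imp_less_base)
  hence "a > 0" "b > 0"
    using a \<open>0 \<le> t\<close> unfolding b_def by linarith+
  have "s^2 - t^2 = 4 * a * b"
    using a unfolding b_def by (simp add: power2_eq_square algebra_simps)
  hence "(g * s - e)^2 + 16 = 32 * (g * r * a * b)"
    using conic by simp
  then obtain n where n: "g * s - e = 4 * n" "odd n" "(n^2 + 1) div 2 = g * r * a * b"
    by (rule square_plus_16_eq_32_mult)
  have "g * s \<ge> 1 * s"
    using assms(2,4) by (intro mult_right_mono) auto
  hence "n > 0"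
    using n(1) assms(4) by linarith
  moreover have "g * a dvd g * r * a * b" "g * b dvd g * r * a * b"
    by (simp_all add: mult.assoc mult.left_commute)
  moreover have "g * a + g * b = 4 * n + e"
    using a n(1) unfolding b_def by (simp add: algebra_simps)
  ultimately have "admissible e n"
    unfolding admissible_def n(3) using n(2) \<open>a > 0\<close> \<open>b > 0\<close> assms(2)
    by (intro conjI exI[of _ "g * a"] exI[of _ "g * b"]) auto
  thus thesis
    using that n(1) by blast
qed

lemma conic_automorphism:
  fixes g r e u w s t c :: int
  assumes "c = 8 * r - g" and "u^2 = 1 + 8 * r * c * w^2"
    and "(g * s - e)^2 + 16 = 8 * g * r * (s^2 - t^2)"
  shows "(g * ((1 + 16 * r * c * w^2) * s + 16 * r * u * w * t + 16 * r * e * w^2) - e)^2 + 16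
    = 8 * g * r * (((1 + 16 * r * c * w^2) * s + 16 * r * u * w * t + 16 * r * e * w^2)^2
        - (2 * u * w * (c * s + e) + (1 + 16 * r * c * w^2) * t)^2)"
  using assms by algebra

lemma conic_point_step:
  fixes g r e u w s t :: int
  assumes pell: "u^2 = 1 + 8 * r * (8 * r - g) * w^2"
    and "u > 0" "w > 0" "r > 0" "8 * r - g > 0"
    and point: "conic_point g r e s t" and pos: "(8 * r - g) * s + e > 0"
  obtains s' t' where "conic_point g r e s' t'" "(8 * r - g) * s' + e > 0" "s < s'"
proof -
  define c where "c = 8 * r - g"
  define s' where "s' = (1 + 16 * r * c * w^2) * s + 16 * r * u * w * t + 16 * r * e * w^2"
  define t' where "t' = 2 * u * w * (c * s + e) + (1 + 16 * r * c * w^2) * t"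
  have conic: "(g * s - e)^2 + 16 = 8 * g * r * (s^2 - t^2)" and "0 \<le> t" "even (s - t)"
    using point by (simp_all add: conic_point_def)
  have "c > 0" "c * s + e > 0"
    using assms(5) pos by (simp_all add: c_def)
  have "(g * s' - e)^2 + 16 = 8 * g * r * (s'^2 - t'^2)"
    using conic_automorphism[OF c_def] pell conic unfolding s'_def t'_def c_def by blast
  moreover have "0 \<le> t'"
    using \<open>u > 0\<close> \<open>w > 0\<close> \<open>r > 0\<close> \<open>c > 0\<close> \<open>c * s + e > 0\<close> \<open>0 \<le> t\<close>
    unfolding t'_def by (simp add: add_nonneg_nonneg)
  moreover have "even (s' - t')"
  proof -
    have "s' - t' = (s - t) + 2 * (8 * r * c * w^2 * s + 8 * r * u * w * t + 8 * r * e * w^2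
        - u * w * (c * s + e) - 8 * r * c * w^2 * t)"
      unfolding s'_def t'_def by (simp add: algebra_simps)
    thus ?thesis
      using \<open>even (s - t)\<close> by simp
  qed
  moreover have "s < s'"
  proof -
    have "s' - s = 16 * r * w * (w * (c * s + e) + u * t)"
      unfolding s'_def by (simp add: algebra_simps power2_eq_square)
    moreover have "w * (c * s + e) + u * t > 0"
      using \<open>w > 0\<close> \<open>u > 0\<close> \<open>0 \<le> t\<close> \<open>c * s + e > 0\<close> by (simp add: add_pos_nonneg)
    hence "16 * r * w * (w * (c * s + e) + u * t) > 0"
      using \<open>r > 0\<close> \<open>w > 0\<close> by simp
    ultimately show ?thesis
      by linarith
  qed
  moreover have "c * s' + e > 0"
    using \<open>s < s'\<close> \<open>c > 0\<close> \<open>c * s + e > 0\<close>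
    by (smt (verit) mult_strict_left_mono)
  ultimately show thesis
    using that unfolding conic_point_def c_def by blast
qed

lemma infinite_admissible_of_conic_point:
  fixes g r e u w s0 t0 :: int
  assumes pell: "u^2 = 1 + 8 * r * (8 * r - g) * w^2"
    and "u > 0" "w > 0" and g: "g > 0" and r: "r > 0" and "8 * r - g > 0"
    and seed: "conic_point g r e s0 t0" "(8 * r - g) * s0 + e > 0"
  shows "infinite {n. admissible e n}"
proof -
  note step = conic_point_step[OF pell \<open>u > 0\<close> \<open>w > 0\<close> r \<open>8 * r - g > 0\<close>]
  have far: "\<exists>s t. conic_point g r e s t \<and> (8 * r - g) * s + e > 0 \<and> s0 + int k \<le> s" for k
  proof (induction k)
    case 0
    show ?case
      using seed by auto
  next
    case (Suc k)
    then obtain s t where point: "conic_point g r e s t" and pos: "(8 * r - g) * s + e > 0"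
      and "s0 + int k \<le> s"
      by blast
    obtain s' t' where "conic_point g r e s' t'" "(8 * r - g) * s' + e > 0" "s < s'"
      by (rule step[OF point pos])
    thus ?case
      using \<open>s0 + int k \<le> s\<close> by (intro exI[of _ s'] exI[of _ t']) auto
  qed
  show ?thesis
    unfolding infinite_int_iff_unbounded
  proof
    fix m :: int
    obtain s t where point: "conic_point g r e s t"
      and "s0 + int (nat (\<bar>e\<bar> + 4 * \<bar>m\<bar> + 1 - s0)) \<le> s"
      using far by blast
    hence s: "\<bar>e\<bar> + 4 * \<bar>m\<bar> < s"
      by linarith
    hence "\<bar>e\<bar> < s"
      by linarith
    then obtain n where n: "g * s - e = 4 * n" "admissible e n"
      by (rule admissible_of_conic_point[OF point g r])
    have "g * s \<ge> 1 * s"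
      using g s by (intro mult_right_mono) auto
    hence "\<bar>n\<bar> > m"
      using n(1) s by linarith
    thus "\<exists>n. \<bar>n\<bar> > m \<and> n \<in> {n. admissible e n}"
      using n(2) by blast
  qed
qed

lemma square_ne_8_mult_odd:
  fixes x m :: nat
  assumes "odd m"
  shows "x^2 \<noteq> 8 * m"
proof
  assume "x^2 = 8 * m"
  then obtain y where "x = 2 * y"
    by (metis dvd_triv_left even_mult_iff even_power even_numeral evenE)
  hence "y^2 = 2 * m"
    using \<open>x^2 = 8 * m\<close> by (simp add: power_mult_distrib)
  then obtain z where "y = 2 * z"
    by (metis dvd_triv_left even_mult_iff even_power pos2 evenE)
  hence "m = 2 * z^2"
    using \<open>y^2 = 2 * m\<close> by (simp add: power_mult_distrib)
  thus False
    using assms by simp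
qed

lemma infinite_admissible_8_mult_plus_6:
  fixes j :: int
  shows "infinite {n. admissible (8 * j + 6) n}"
proof -
  define r where "r = 2 * j^2 + 2 * j + 1"
  have "2 * r = (2 * j + 1)^2 + 1"
    unfolding r_def by (simp add: power2_eq_square algebra_simps)
  hence "r > 0"
    using zero_le_power2[of "2 * j + 1"] by (smt (verit))
  have "2 * ((8 * r - 1) * 2 + (8 * j + 6)) = (8 * j + 5)^2 + 15"
    unfolding r_def by (simp add: power2_eq_square algebra_simps)
  hence "(8 * r - 1) * 2 + (8 * j + 6) > 0"
    using zero_le_power2[of "8 * j + 5"] by (smt (verit))
  moreover have "conic_point 1 r (8 * j + 6) 2 0"
    unfolding conic_point_def r_def by (simp add: power2_eq_square algebra_simps)
  moreover have "(16 * r - 1)^2 = 1 + 8 * r * (8 * r - 1) * 2^2"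
    by (simp add: power2_eq_square algebra_simps)
  ultimately show ?thesis
    using \<open>r > 0\<close> by (intro infinite_admissible_of_conic_point[where u = "16 * r - 1" and w = 2]) auto
qed

lemma infinite_admissible_8_mult_plus_2:
  fixes j :: int
  shows "infinite {n. admissible (8 * j + 2) n}"
proof -
  define g where "g = 16 * j^2 + 8 * j + 5"
  define r where "r = 8 * j^4 + 4 * j^2 + 1"
  define c where "c = 8 * r - g"
  have c: "c = 64 * j^4 + 16 * j^2 - 8 * j + 3"
    unfolding c_def r_def g_def by simp
  have "16 * j^2 - 8 * j + 3 = (4 * j - 1)^2 + 2"
    by (simp add: power2_eq_square algebra_simps)
  hence pos: "16 * j^2 - 8 * j + 3 > 0"
    using zero_le_power2[of "4 * j - 1"] by (smt (verit))
  have "g = (4 * j + 1)^2 + 4"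
    unfolding g_def by (simp add: power2_eq_square algebra_simps)
  hence "g > 0"
    using zero_le_power2[of "4 * j + 1"] by (smt (verit))
  have "j^4 \<ge> 0" "j^2 \<ge> 0"
    by (simp_all add: zero_le_even_power)
  hence "r > 0" "c > 0"
    using pos unfolding r_def c by linarith+
  have "odd r" "odd c"
    unfolding r_def c by (simp_all add: even_add)
  hence "\<And>x. x^2 \<noteq> 8 * nat (r * c)"
    using \<open>r > 0\<close> \<open>c > 0\<close> by (intro square_ne_8_mult_odd) (simp add: even_nat_iff)
  then obtain x y :: int where "y > 0" and xy: "x^2 = 1 + int (8 * nat (r * c)) * y^2"
    using pell_solution_exists by blast
  hence pell: "\<bar>x\<bar>^2 = 1 + 8 * r * (8 * r - g) * y^2"
    using \<open>r > 0\<close> \<open>c > 0\<close> unfolding c_def by simp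
  have "8 * r * (8 * r - g) * y^2 \<ge> 0"
    using \<open>r > 0\<close> \<open>c > 0\<close> unfolding c_def by simp
  hence "\<bar>x\<bar>^2 > 0"
    using pell by linarith
  hence "x \<noteq> 0"
    by simp
  define s0 where "s0 = 16 * j^2 - 8 * j + 6"
  define t0 where "t0 = 16 * j^2 - 8 * j + 4"
  have "conic_point g r (8 * j + 2) s0 t0"
    using pos unfolding conic_point_def s0_def t0_def g_def r_def
    by (simp add: power2_eq_square power4_eq_xxxx algebra_simps)
  moreover have "c * s0 + (8 * j + 2) > 0"
  proof -
    have "c * s0 \<ge> 1 * s0"
      using \<open>c > 0\<close> pos unfolding s0_def by (intro mult_right_mono) auto
    thus ?thesis
      unfolding s0_def using \<open>j^2 \<ge> 0\<close> by (smt (verit))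
  qed
  ultimately show ?thesis
    using pell \<open>x \<noteq> 0\<close> \<open>y > 0\<close> \<open>g > 0\<close> \<open>r > 0\<close> \<open>c > 0\<close> unfolding c_def
    by (intro infinite_admissible_of_conic_point[where u = "\<bar>x\<bar>" and w = y]) auto
qed

theorem theorem2:
  fixes \<epsilon> :: int
  assumes "\<epsilon> mod 4 = 2"
  shows "infinite {n :: int. n > 0 \<and> odd n \<and>
           (\<exists>d1 d2 :: int. d1 > 0 \<and> d2 > 0 \<and> d1 dvd (n^2 + 1) div 2 \<and>
              d2 dvd (n^2 + 1) div 2 \<and> d1 + d2 = 4 * n + \<epsilon>)}"
proof -
  have "\<exists>j. \<epsilon> = 8 * j + 2 \<or> \<epsilon> = 8 * j + 6"
    using assms by presburger
  then obtain j where "\<epsilon> = 8 * j + 2 \<or> \<epsilon> = 8 * j + 6"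
    by blast
  hence "infinite {n. admissible \<epsilon> n}"
    using infinite_admissible_8_mult_plus_2 infinite_admissible_8_mult_plus_6 by blast
  thus ?thesis
    unfolding admissible_def .
qed

end
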